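(* Let $\delta>0$ and $p\geq1$ be real numbers and let $u:\mathbb{R}\to\mathbb{R}$ be a $\delta$-step function. Then there exists a family $\{u_{\varepsilon}\}_{\varepsilon>0}\subseteq C^{\infty}_{c}(\mathbb{R})$ such that $u_{\varepsilon}\to u$ in $L^{p}(\mathbb{R})$ as $\varepsilon\to0^{+}$ and \[ \lim_{\varepsilon\to0^{+}}\Lambda_{\delta,p}(u_{\varepsilon},\mathbb{R})=\Lambda_{\delta,p}(u,\mathbb{R}). \]
   Context: A function $u:\mathbb{R}\to\mathbb{R}$ is a $\delta$-step function if there exist a positive integer $n$, real numbers $x_{0}<x_{1}<\dots<x_{n}$ and $(k_{1},\ldots,k_{n})\in\mathbb{Z}^{n}$ such that $u=0$ on $(-\infty,x_{0})\cup(x_{n},+\infty)$, $u=k_{i}\delta$ on $(x_{i-1},x_{i})$ for $i=1,\ldots,n$, $|k_{1}|=|k_{n}|=1$, and $|k_{i}-k_{i-1}|=1$ for $i=2,\ldots,n$ (values at the points $x_i$ are irrelevant). For measurable $v:\mathbb{R}\to\mathbb{R}$, $\Lambda_{\delta,p}(v,\mathbb{R}):=\iint_{\{(x,y)\in\mathbb{R}^{2}:|v(y)-v(x)|>\delta\}}\frac{\delta^{p}}{|y-x|^{1+p}}\,dx\,dy$. *)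

theory Defs
  imports "HOL-Analysis.Analysis"
begin

definition step_fun :: "real \<Rightarrow> (real \<Rightarrow> real) \<Rightarrow> bool" where
  "step_fun \<delta> u \<longleftrightarrow>
     (\<exists>(n::nat) (xs::nat \<Rightarrow> real) (k::nat \<Rightarrow> int).
        n \<ge> 1 \<and>
        (\<forall>i<n. xs i < xs (Suc i)) \<and>
        (\<forall>x. (x < xs 0 \<or> x > xs n) \<longrightarrow> u x = 0) \<and>
        (\<forall>i\<in>{1..n}. \<forall>x. xs (i - 1) < x \<and> x < xs i \<longrightarrow> u x = real_of_int (k i) * \<delta>) \<and>
        \<bar>k 1\<bar> = 1 \<and> \<bar>k n\<bar> = 1 \<and>
        (\<forall>i\<in>{2..n}. \<bar>k i - k (i - 1)\<bar> = 1))"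

definition Lambda :: "real \<Rightarrow> real \<Rightarrow> (real \<Rightarrow> real) \<Rightarrow> ennreal" where
  "Lambda \<delta> p v =
     (\<integral>\<^sup>+ z. indicator {z. \<bar>v (snd z) - v (fst z)\<bar> > \<delta>} z *
        ennreal (\<delta> powr p / \<bar>snd z - fst z\<bar> powr (1 + p)) \<partial>(lborel \<Otimes>\<^sub>M lborel))"

definition smooth_real :: "(real \<Rightarrow> real) \<Rightarrow> bool" where
  "smooth_real f \<longleftrightarrow> (\<forall>m x. ((deriv ^^ m) f) differentiable (at x))"

definition Cc_inf :: "(real \<Rightarrow> real) \<Rightarrow> bool" where
  "Cc_inf f \<longleftrightarrow> smooth_real f \<and> compact (closure {x. f x \<noteq> 0})"

end

theory Submission
  imports Defs "HOL-Computational_Algebra.Polynomial"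
begin

(* Each jump of u by \<plusminus>\<delta> at x_i is replaced by the smooth transition \<plusminus>\<delta> H((x - x_i)/\<epsilon>), where
   H is a smooth Heaviside function, 0 on (-\<infinity>, 0] and 1 on [1, \<infinity>).  Off the finitely many jump
   points u_\<epsilon> = u once \<epsilon> is small, and all functions vanish outside a fixed interval, so the
   L^p convergence is dominated convergence.  For \<Lambda> the point is that once \<epsilon> is below half
   the minimal gap between jump points, at most one transition separates two points at distance
   less than half the gap, so |u_\<epsilon>(y) - u_\<epsilon>(x)| \<le> \<delta> for them.  Hence the integrand of
   \<Lambda>(u_\<epsilon>) is dominated by the kernel \<delta>^p/|y - x|^(1+p) restricted to pairs at distance at
   least half the gap with one point near the support, which is integrable, and dominated
   convergence applies again.  Smoothness of H = e(y)/(e(y) + e(1 - y)), e(y) = exp(-1/y), follows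
   because it lies in an algebra of functions whose generators have derivatives in the algebra. *)

definition flat_exp :: "real poly \<Rightarrow> real \<Rightarrow> real" where
  "flat_exp q x = (if x > 0 then poly q (1/x) * exp (-(1/x)) else 0)"

(* (q(1/x) e^(-1/x))' = (1/x)^2 (q - q')(1/x) e^(-1/x) *)
definition flat_exp_deriv_poly :: "real poly \<Rightarrow> real poly" where
  "flat_exp_deriv_poly q = [:0,0,1:] * (q - pderiv q)"

lemma poly_div_exp_tendsto_0: "((\<lambda>t. poly r t / exp t) \<longlongrightarrow> (0::real)) at_top"
proof -
  have "((\<lambda>t. \<Sum>i\<le>degree r. coeff r i * (t ^ i / exp t)) \<longlongrightarrow> (\<Sum>i\<le>degree r. coeff r i * 0)) at_top"
    by (intro tendsto_sum tendsto_mult tendsto_const tendsto_power_div_exp_0)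
  moreover have "(\<lambda>t. \<Sum>i\<le>degree r. coeff r i * (t ^ i / exp t)) = (\<lambda>t. poly r t / exp t)"
    by (auto simp: poly_altdef sum_divide_distrib)
  ultimately show ?thesis by simp
qed

lemma flat_exp_nonpos: "y \<le> 0 \<Longrightarrow> flat_exp q y = 0"
  by (simp add: flat_exp_def)

lemma has_real_derivative_flat_exp_pos:
  assumes "x > 0"
  shows "(flat_exp q has_real_derivative flat_exp (flat_exp_deriv_poly q) x) (at x)"
proof -
  have inv: "((\<lambda>x. 1/x) has_real_derivative -(1/x^2)) (at x)"
    using DERIV_inverse[of x] assms by (simp add: inverse_eq_divide power2_eq_square)
  have "((\<lambda>x. poly q (1/x) * exp (-(1/x))) has_real_derivative
     poly (pderiv q) (1/x) * (-(1/x^2)) * exp (-(1/x)) + poly q (1/x) * (exp (-(1/x)) * (1/x^2))) (at x)"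
    using DERIV_mult[OF DERIV_chain2[OF poly_DERIV inv] DERIV_chain2[OF DERIV_exp DERIV_minus[OF inv]]]
    by (simp add: mult.commute)
  also have "poly (pderiv q) (1/x) * (-(1/x^2)) * exp (-(1/x)) + poly q (1/x) * (exp (-(1/x)) * (1/x^2))
      = flat_exp (flat_exp_deriv_poly q) x"
    using assms by (simp add: flat_exp_def flat_exp_deriv_poly_def poly_mult power2_eq_square algebra_simps)
  finally show ?thesis
    by (rule has_field_derivative_transform_within_open[where S="{0<..}"])
      (use assms in \<open>auto simp: flat_exp_def\<close>)
qed

lemma has_real_derivative_flat_exp_neg:
  assumes "x < 0"
  shows "(flat_exp q has_real_derivative flat_exp (flat_exp_deriv_poly q) x) (at x)"
proof -
  have "((\<lambda>x. 0) has_real_derivative flat_exp (flat_exp_deriv_poly q) x) (at x)"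
    using assms by (simp add: flat_exp_nonpos)
  then show ?thesis
    by (rule has_field_derivative_transform_within_open[where S="{..<0}"])
      (use assms in \<open>auto simp: flat_exp_nonpos\<close>)
qed

lemma has_real_derivative_flat_exp_0:
  "(flat_exp q has_real_derivative flat_exp (flat_exp_deriv_poly q) 0) (at 0)"
proof -
  have "((\<lambda>y. flat_exp q y / y) \<longlongrightarrow> 0) (at 0)"
  proof (rule filterlim_split_at)
    have "\<forall>\<^sub>F y in at_left (0::real). flat_exp q y / y = 0"
      using eventually_at_left_field[of "\<lambda>y. y < 0" 0]
      by (auto intro: exI[of _ "-1"] elim!: eventually_mono simp: flat_exp_nonpos)
    then show "((\<lambda>y. flat_exp q y / y) \<longlongrightarrow> 0) (at_left 0)"
      by (rule tendsto_eventually)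
    have "eventually (\<lambda>t. poly ([:0,1:] * q) t / exp t = flat_exp q (inverse t) / inverse t) at_top"
      using eventually_gt_at_top[of 0]
      by eventually_elim (simp add: flat_exp_def poly_mult exp_minus divide_inverse mult_ac)
    with poly_div_exp_tendsto_0 have "((\<lambda>t. flat_exp q (inverse t) / inverse t) \<longlongrightarrow> 0) at_top"
      by (rule Lim_transform_eventually)
    from filterlim_compose[OF this filterlim_inverse_at_top_right]
    show "((\<lambda>y. flat_exp q y / y) \<longlongrightarrow> 0) (at_right 0)"
      by simp
  qed
  then show ?thesis
    by (simp add: has_field_derivative_iff flat_exp_def)
qed

lemma has_real_derivative_flat_exp:
  "(flat_exp q has_real_derivative flat_exp (flat_exp_deriv_poly q) x) (at x)"
  using has_real_derivative_flat_exp_pos has_real_derivative_flat_exp_neg has_real_derivative_flat_exp_0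
  by (cases x "0::real" rule: linorder_cases) auto

coinductive_set C_inf_funs :: "(real \<Rightarrow> real) set" where
  "(\<forall>x. g differentiable (at x)) \<Longrightarrow> deriv g \<in> C_inf_funs \<Longrightarrow> g \<in> C_inf_funs"

lemma C_inf_funs_funpow_deriv: "g \<in> C_inf_funs \<Longrightarrow> (deriv ^^ m) g \<in> C_inf_funs"
  by (induction m) (auto elim: C_inf_funs.cases)

lemma C_inf_funs_imp_smooth_real: "g \<in> C_inf_funs \<Longrightarrow> smooth_real g"
  unfolding smooth_real_def using C_inf_funs_funpow_deriv by (blast elim: C_inf_funs.cases)

inductive_set fun_algebra :: "(real \<Rightarrow> real) set \<Rightarrow> (real \<Rightarrow> real) set" for B where
  base: "f \<in> B \<Longrightarrow> f \<in> fun_algebra B"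
| const: "(\<lambda>x. c) \<in> fun_algebra B"
| add: "f \<in> fun_algebra B \<Longrightarrow> g \<in> fun_algebra B \<Longrightarrow> (\<lambda>x. f x + g x) \<in> fun_algebra B"
| mult: "f \<in> fun_algebra B \<Longrightarrow> g \<in> fun_algebra B \<Longrightarrow> (\<lambda>x. f x * g x) \<in> fun_algebra B"

lemma fun_algebra_sum:
  "finite I \<Longrightarrow> (\<And>i. i \<in> I \<Longrightarrow> f i \<in> fun_algebra B) \<Longrightarrow> (\<lambda>x. \<Sum>i\<in>I. f i x) \<in> fun_algebra B"
proof (induction I rule: finite_induct)
  case empty
  then show ?case using fun_algebra.const[of 0 B] by simp
next
  case (insert i I)
  then show ?case using fun_algebra.add[of "f i" B "\<lambda>x. \<Sum>i\<in>I. f i x"] by simp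
qed

locale derivative_closed_generators =
  fixes B :: "(real \<Rightarrow> real) set"
  assumes generator_deriv:
    "\<And>f. f \<in> B \<Longrightarrow> \<exists>f'. (\<forall>x. (f has_real_derivative f' x) (at x)) \<and> f' \<in> fun_algebra B"
begin

lemma fun_algebra_deriv:
  "h \<in> fun_algebra B \<Longrightarrow> \<exists>h'. (\<forall>x. (h has_real_derivative h' x) (at x)) \<and> h' \<in> fun_algebra B"
proof (induction h rule: fun_algebra.induct)
  case (base f)
  then show ?case using generator_deriv by blast
next
  case (const c)
  then show ?case by (intro exI[of _ "\<lambda>x. 0"]) (auto intro: fun_algebra.const)
next
  case (add f g)
  then obtain f' g' where "\<forall>x. (f has_real_derivative f' x) (at x)" "f' \<in> fun_algebra B"
    and "\<forall>x. (g has_real_derivative g' x) (at x)" "g' \<in> fun_algebra B" by blast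
  then show ?case
    by (intro exI[of _ "\<lambda>x. f' x + g' x"]) (auto intro: DERIV_add fun_algebra.add)
next
  case (mult f g)
  then obtain f' g' where "\<forall>x. (f has_real_derivative f' x) (at x)" "f' \<in> fun_algebra B"
    and "\<forall>x. (g has_real_derivative g' x) (at x)" "g' \<in> fun_algebra B" by blast
  moreover have "((\<lambda>x. f x * g x) has_real_derivative f' x * g x + f x * g' x) (at x)"
    if "(f has_real_derivative f' x) (at x)" "(g has_real_derivative g' x) (at x)" for x
    using DERIV_mult[OF that] by (simp add: mult.commute)
  ultimately show ?case using mult.hyps
    by (intro exI[of _ "\<lambda>x. f' x * g x + f x * g' x"]) (auto intro!: fun_algebra.add fun_algebra.mult)
qed

lemma fun_algebra_C_inf_funs:
  assumes "h \<in> fun_algebra B"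
  shows "h \<in> C_inf_funs"
  using assms
proof (coinduction arbitrary: h rule: C_inf_funs.coinduct)
  case (C_inf_funs h)
  then obtain h' where d: "\<forall>x. (h has_real_derivative h' x) (at x)" and "h' \<in> fun_algebra B"
    using fun_algebra_deriv by blast
  moreover have "deriv h = h'"
    using d by (auto intro!: ext DERIV_imp_deriv)
  ultimately show ?case
    using real_differentiable_def by blast
qed

end

definition heaviside_normaliser :: "real \<Rightarrow> real" where
  "heaviside_normaliser y = 1 / (flat_exp 1 y + flat_exp 1 (1 - y))"

definition smooth_heaviside :: "real \<Rightarrow> real" where
  "smooth_heaviside y = flat_exp 1 y * heaviside_normaliser y"

lemma flat_exp_one_nonneg: "flat_exp 1 y \<ge> 0"
  by (simp add: flat_exp_def)

lemma flat_exp_one_pos: "y > 0 \<Longrightarrow> flat_exp 1 y > 0"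
  by (simp add: flat_exp_def)

lemma flat_exp_one_partition_pos: "flat_exp 1 y + flat_exp 1 (1 - y) > 0"
  using flat_exp_one_nonneg[of y] flat_exp_one_nonneg[of "1 - y"]
    flat_exp_one_pos[of y] flat_exp_one_pos[of "1 - y"]
  by (cases "y > 0") auto

lemma smooth_heaviside_nonpos: "y \<le> 0 \<Longrightarrow> smooth_heaviside y = 0"
  by (simp add: smooth_heaviside_def flat_exp_nonpos)

lemma smooth_heaviside_ge_1: "y \<ge> 1 \<Longrightarrow> smooth_heaviside y = 1"
  using flat_exp_one_pos[of y] by (simp add: smooth_heaviside_def heaviside_normaliser_def flat_exp_nonpos)

lemma smooth_heaviside_bounds: "0 \<le> smooth_heaviside y" "smooth_heaviside y \<le> 1"
  using flat_exp_one_partition_pos[of y] flat_exp_one_nonneg[of y] flat_exp_one_nonneg[of "1 - y"]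
  by (simp_all add: smooth_heaviside_def heaviside_normaliser_def divide_simps)

lemma abs_smooth_heaviside_diff_le_1: "\<bar>smooth_heaviside a - smooth_heaviside b\<bar> \<le> 1"
  using smooth_heaviside_bounds[of a] smooth_heaviside_bounds[of b] by (simp add: abs_le_iff)

lemma smooth_heaviside_scaled_eq:
  assumes "\<epsilon> > 0" and "max x y \<le> a \<or> a + \<epsilon> \<le> min x y"
  shows "smooth_heaviside ((y - a) / \<epsilon>) = smooth_heaviside ((x - a) / \<epsilon>)"
  using assms(2)
proof
  assume "max x y \<le> a"
  then show ?thesis
    using assms(1) by (simp add: smooth_heaviside_nonpos divide_nonpos_pos)
next
  assume "a + \<epsilon> \<le> min x y"
  then have "1 \<le> (y - a) / \<epsilon>" "1 \<le> (x - a) / \<epsilon>"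
    using assms(1) by (simp_all add: field_simps)
  then show ?thesis
    by (simp add: smooth_heaviside_ge_1)
qed

lemma has_real_derivative_heaviside_normaliser:
  "(heaviside_normaliser has_real_derivative
     - (flat_exp (flat_exp_deriv_poly 1) y - flat_exp (flat_exp_deriv_poly 1) (1 - y))
       * heaviside_normaliser y * heaviside_normaliser y) (at y)"
proof -
  have "((\<lambda>y. 1 / (flat_exp 1 y + flat_exp 1 (1 - y))) has_real_derivative
     - (flat_exp (flat_exp_deriv_poly 1) y + flat_exp (flat_exp_deriv_poly 1) (1 - y) * (0 - 1))
       / (flat_exp 1 y + flat_exp 1 (1 - y))^2) (at y)"
    using flat_exp_one_partition_pos[of y]
    by (auto intro!: derivative_eq_intros DERIV_chain2[OF has_real_derivative_flat_exp]
        has_real_derivative_flat_exp simp: power2_eq_square)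
  then show ?thesis
    unfolding heaviside_normaliser_def[abs_def] by (simp add: power2_eq_square field_simps)
qed

definition heaviside_generators :: "(real \<Rightarrow> real) set" where
  "heaviside_generators =
     {(\<lambda>x. flat_exp q (a * x + b)) | q a b. True} \<union> {(\<lambda>x. heaviside_normaliser (a * x + b)) | a b. True}"

lemma flat_exp_affine_generator: "(\<lambda>x. flat_exp q (a * x + b)) \<in> fun_algebra heaviside_generators"
  by (rule fun_algebra.base) (auto simp: heaviside_generators_def)

lemma heaviside_normaliser_affine_generator:
  "(\<lambda>x. heaviside_normaliser (a * x + b)) \<in> fun_algebra heaviside_generators"
  by (rule fun_algebra.base) (auto simp: heaviside_generators_def)

interpretation heaviside: derivative_closed_generators heaviside_generators
proof
  have affine: "((\<lambda>x. a * x + b) has_real_derivative a) (at x)" for a b x :: real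
    by (auto intro!: derivative_eq_intros)
  fix f
  assume "f \<in> heaviside_generators"
  then consider (flat) q a b where "f = (\<lambda>x. flat_exp q (a * x + b))"
    | (normaliser) a b where "f = (\<lambda>x. heaviside_normaliser (a * x + b))"
    unfolding heaviside_generators_def by blast
  then show "\<exists>f'. (\<forall>x. (f has_real_derivative f' x) (at x)) \<and> f' \<in> fun_algebra heaviside_generators"
  proof cases
    case flat
    have "(f has_real_derivative flat_exp (flat_exp_deriv_poly q) (a * x + b) * a) (at x)" for x
      unfolding flat by (rule DERIV_chain2[OF has_real_derivative_flat_exp affine])
    then show ?thesis
      by (intro exI[of _ "\<lambda>x. flat_exp (flat_exp_deriv_poly q) (a * x + b) * a"] conjI allI
          fun_algebra.mult fun_algebra.const flat_exp_affine_generator)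
  next
    case normaliser
    let ?E = "\<lambda>x. flat_exp (flat_exp_deriv_poly 1) (a * x + b)"
      and ?E' = "\<lambda>x. flat_exp (flat_exp_deriv_poly 1) ((-a) * x + (1 - b))"
      and ?R = "\<lambda>x. heaviside_normaliser (a * x + b)"
    have "(f has_real_derivative (- a) * (?E x + (-1) * ?E' x) * ?R x * ?R x) (at x)" for x
      unfolding normaliser
      by (rule DERIV_cong[OF DERIV_chain2[OF has_real_derivative_heaviside_normaliser affine]])
        (simp add: algebra_simps)
    moreover have "(\<lambda>x. (- a) * (?E x + (-1) * ?E' x) * ?R x * ?R x) \<in> fun_algebra heaviside_generators"
      by (intro fun_algebra.mult fun_algebra.add fun_algebra.const flat_exp_affine_generator
          heaviside_normaliser_affine_generator)
    ultimately show ?thesis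
      by (intro exI[of _ "\<lambda>x. (- a) * (?E x + (-1) * ?E' x) * ?R x * ?R x"]) blast
  qed
qed

lemma smooth_heaviside_affine_algebra:
  "(\<lambda>x. smooth_heaviside (a * x + b)) \<in> fun_algebra heaviside_generators"
  unfolding smooth_heaviside_def
  by (intro fun_algebra.mult flat_exp_affine_generator heaviside_normaliser_affine_generator)

lemma smooth_heaviside_combination_C_inf:
  "finite I \<Longrightarrow> (\<lambda>x. \<Sum>i\<in>I. c i * smooth_heaviside (a i * x + b i)) \<in> C_inf_funs"
  by (intro heaviside.fun_algebra_C_inf_funs fun_algebra_sum fun_algebra.mult[OF fun_algebra.const]
      smooth_heaviside_affine_algebra)

lemma continuous_on_smooth_heaviside: "continuous_on UNIV smooth_heaviside"
proof -
  have "(\<lambda>x. smooth_heaviside (1 * x + 0)) \<in> C_inf_funs"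
    by (intro heaviside.fun_algebra_C_inf_funs smooth_heaviside_affine_algebra)
  then have "\<forall>x. smooth_heaviside differentiable (at x)"
    by (auto elim: C_inf_funs.cases)
  then show ?thesis
    by (simp add: continuous_at_imp_continuous_on differentiable_imp_continuous_within)
qed

lemma borel_measurable_smooth_heaviside [measurable]: "smooth_heaviside \<in> borel_measurable borel"
  by (rule borel_measurable_continuous_onI[OF continuous_on_smooth_heaviside])

lemma nn_integral_kernel_tail_finite:
  fixes r p C :: real
  assumes r: "r > 0" and p: "p > 0" and C: "C \<ge> 0"
  shows "(\<integral>\<^sup>+t. indicator {t. r \<le> \<bar>t\<bar>} t * ennreal (C / \<bar>t\<bar> powr (1 + p)) \<partial>lborel) < \<infinity>"
proof -
  define f where "f t = C / t powr (1 + p)" for t :: real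
  define F where "F t = - (C / p) * t powr (- p)" for t :: real
  have f_measurable [measurable]: "f \<in> borel_measurable borel"
    unfolding f_def by measurable
  have right: "(\<integral>\<^sup>+t. ennreal (f t) * indicator {r..} t \<partial>lborel) = ennreal (0 - F r)"
  proof (rule nn_integral_FTC_atLeast)
    fix t
    assume "r \<le> t"
    then have t: "t > 0"
      using r by simp
    have "- p - 1 = - (1 + p)"
      by simp
    then have "t powr (- p - 1) = inverse (t powr (1 + p))"
      by (metis powr_minus)
    have "(F has_real_derivative - (C / p) * (- p * t powr (- p - 1))) (at t)"
      unfolding F_def[abs_def] by (rule DERIV_cmult[OF has_real_derivative_powr[OF t]])
    then show "(F has_real_derivative f t) (at t)"
      by (rule DERIV_cong) (use p \<open>t powr (- p - 1) = _\<close> in \<open>simp add: f_def divide_inverse\<close>)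
  next
    have "((\<lambda>t. - (C / p) * t powr (- p)) \<longlongrightarrow> - (C / p) * 0) at_top"
      using p by (intro tendsto_mult tendsto_const tendsto_neg_powr filterlim_ident) auto
    then show "(F \<longlongrightarrow> 0) at_top"
      unfolding F_def[abs_def] by simp
  qed (use r C in \<open>simp_all add: f_def\<close>)
  have left: "(\<integral>\<^sup>+t. ennreal (f (- t)) * indicator {..- r} t \<partial>lborel) = ennreal (0 - F r)"
    using nn_integral_real_affine[of "\<lambda>t. ennreal (f t) * indicator {r..} t" "-1" 0] right
    by (simp add: indicator_def le_minus_iff)
  have "(\<integral>\<^sup>+t. indicator {t. r \<le> \<bar>t\<bar>} t * ennreal (C / \<bar>t\<bar> powr (1 + p)) \<partial>lborel)
      \<le> (\<integral>\<^sup>+t. ennreal (f t) * indicator {r..} t + ennreal (f (- t)) * indicator {..- r} t \<partial>lborel)"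
    using r by (intro nn_integral_mono) (auto simp: indicator_def f_def)
  also have "\<dots> = ennreal (0 - F r) + ennreal (0 - F r)"
    using right left by (subst nn_integral_add) auto
  finally show ?thesis
    by (simp add: order_le_less_trans)
qed

definition far_kernel :: "real \<Rightarrow> real \<Rightarrow> real \<Rightarrow> real set \<Rightarrow> real \<times> real \<Rightarrow> ennreal" where
  "far_kernel C p r A z =
     indicator {z. (fst z \<in> A \<or> snd z \<in> A) \<and> r \<le> \<bar>snd z - fst z\<bar>} z
       * ennreal (C / \<bar>snd z - fst z\<bar> powr (1 + p))"

lemma nn_integral_far_kernel_finite:
  fixes r p C a b :: real
  assumes r: "r > 0" and p: "p > 0" and C: "C \<ge> 0"
  shows "(\<integral>\<^sup>+z. far_kernel C p r {a..b} z \<partial>(lborel \<Otimes>\<^sub>M lborel)) < \<infinity>"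
proof -
  define \<phi> where "\<phi> t = indicator {t. r \<le> \<bar>t\<bar>} t * ennreal (C / \<bar>t\<bar> powr (1 + p))" for t :: real
  define I where "I = (\<integral>\<^sup>+t. \<phi> t \<partial>lborel)"
  have [measurable]: "\<phi> \<in> borel_measurable borel"
    unfolding \<phi>_def by measurable
  have shift_snd: "(\<integral>\<^sup>+y. \<phi> (y - x) \<partial>lborel) = I" for x
    unfolding I_def by (subst nn_integral_real_affine[of _ 1 "- x"]) auto
  have shift_fst: "(\<integral>\<^sup>+x. \<phi> (y - x) \<partial>lborel) = I" for y
    unfolding I_def by (subst nn_integral_real_affine[of _ "- 1" y]) auto
  have "(\<integral>\<^sup>+z. far_kernel C p r {a..b} z \<partial>(lborel \<Otimes>\<^sub>M lborel))
      \<le> (\<integral>\<^sup>+z. indicator {a..b} (fst z) * \<phi> (snd z - fst z)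
            + indicator {a..b} (snd z) * \<phi> (snd z - fst z) \<partial>(lborel \<Otimes>\<^sub>M lborel))"
    by (rule nn_integral_mono) (auto simp: indicator_def \<phi>_def far_kernel_def)
  also have "\<dots> = (\<integral>\<^sup>+x. \<integral>\<^sup>+y. indicator {a..b} x * \<phi> (y - x) \<partial>lborel \<partial>lborel)
      + (\<integral>\<^sup>+y. \<integral>\<^sup>+x. indicator {a..b} y * \<phi> (y - x) \<partial>lborel \<partial>lborel)"
    by (subst nn_integral_add, simp, simp,
        subst lborel.nn_integral_fst[symmetric], simp, subst lborel_pair.nn_integral_snd[symmetric]) auto
  also have "\<dots> = (\<integral>\<^sup>+x. indicator {a..b} x * I \<partial>lborel) + (\<integral>\<^sup>+y. indicator {a..b} y * I \<partial>lborel)"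
    by (simp add: nn_integral_cmult shift_snd shift_fst)
  also have "\<dots> < \<infinity>"
    using nn_integral_kernel_tail_finite[OF r p C]
    by (simp add: I_def \<phi>_def nn_integral_multc ennreal_mult_less_top emeasure_lborel_Icc_eq)
  finally show ?thesis .
qed

definition Lambda_density :: "real \<Rightarrow> real \<Rightarrow> (real \<Rightarrow> real) \<Rightarrow> real \<times> real \<Rightarrow> ennreal" where
  "Lambda_density \<delta> p v z =
     indicator {z. \<bar>v (snd z) - v (fst z)\<bar> > \<delta>} z * ennreal (\<delta> powr p / \<bar>snd z - fst z\<bar> powr (1 + p))"

lemma Lambda_eq_nn_integral_density:
  "Lambda \<delta> p v = (\<integral>\<^sup>+z. Lambda_density \<delta> p v z \<partial>(lborel \<Otimes>\<^sub>M lborel))"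
  by (simp add: Lambda_def Lambda_density_def)

lemma borel_measurable_Lambda_density:
  assumes [measurable]: "v \<in> borel_measurable borel"
  shows "Lambda_density \<delta> p v \<in> borel_measurable (lborel \<Otimes>\<^sub>M lborel)"
  unfolding Lambda_density_def by measurable

lemma AE_pair_notin_null:
  assumes "N \<in> null_sets lborel"
  shows "AE z in lborel \<Otimes>\<^sub>M lborel. fst z \<notin> N \<and> snd z \<notin> N"
proof (rule AE_I')
  show "N \<times> UNIV \<union> UNIV \<times> N \<in> null_sets (lborel \<Otimes>\<^sub>M lborel)"
    using assms by (intro null_sets.Un lborel.times_in_null_sets1 lborel.times_in_null_sets2) auto
qed auto

lemma Lambda_cong_null:
  assumes "N \<in> null_sets lborel" and "\<And>x. x \<notin> N \<Longrightarrow> u x = v x"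
  shows "Lambda \<delta> p u = Lambda \<delta> p v"
  unfolding Lambda_eq_nn_integral_density
proof (intro nn_integral_cong_AE eventually_mono[OF AE_pair_notin_null[OF assms(1)]])
  fix z :: "real \<times> real"
  assume "fst z \<notin> N \<and> snd z \<notin> N"
  then show "Lambda_density \<delta> p u z = Lambda_density \<delta> p v z"
    by (simp add: Lambda_density_def indicator_def assms(2))
qed

locale delta_step =
  fixes \<delta> :: real and n :: nat and xs :: "nat \<Rightarrow> real" and k :: "nat \<Rightarrow> int"
  assumes delta_pos: "\<delta> > 0" and n_ge_1: "n \<ge> 1"
    and xs_Suc: "\<forall>i<n. xs i < xs (Suc i)"
    and k_first: "\<bar>k 1\<bar> = 1" and k_last: "\<bar>k n\<bar> = 1"
    and k_step: "\<forall>i\<in>{2..n}. \<bar>k i - k (i - 1)\<bar> = 1"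
begin

(* k extended by 0, so that jump 0 and jump n are the jumps at x_0 and x_n *)
definition level :: "nat \<Rightarrow> real" where
  "level i = (if 1 \<le> i \<and> i \<le> n then real_of_int (k i) else 0)"

definition jump :: "nat \<Rightarrow> real" where
  "jump i = \<delta> * (level (Suc i) - level i)"

definition step_rep :: "real \<Rightarrow> real" where
  "step_rep x = (\<Sum>i\<le>n. jump i * (if xs i < x then 1 else 0))"

definition mollified :: "real \<Rightarrow> real \<Rightarrow> real" where
  "mollified \<epsilon> x = (\<Sum>i\<le>n. jump i * smooth_heaviside ((x - xs i) / \<epsilon>))"

definition jump_points :: "real set" where
  "jump_points = xs ` {..n}"

definition min_gap :: real where
  "min_gap = Min ((\<lambda>i. xs (Suc i) - xs i) ` {..<n})"

lemma xs_less: "i < j \<Longrightarrow> j \<le> n \<Longrightarrow> xs i < xs j"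
proof (induction j)
  case (Suc j)
  then show ?case
    using xs_Suc by (cases "i = j") (auto, meson Suc_le_lessD less_Suc_eq order_less_trans)
qed simp

lemma xs_le: "i \<le> j \<Longrightarrow> j \<le> n \<Longrightarrow> xs i \<le> xs j"
  using xs_less[of i j] by (cases "i = j") auto

lemma min_gap_pos: "min_gap > 0"
  unfolding min_gap_def using n_ge_1 xs_Suc by (subst Min_gr_iff) (auto simp: lessThan_empty_iff)

lemma min_gap_le: "i < j \<Longrightarrow> j \<le> n \<Longrightarrow> min_gap \<le> xs j - xs i"
proof -
  assume ij: "i < j" "j \<le> n"
  have "min_gap \<le> xs (Suc i) - xs i"
    unfolding min_gap_def using ij by (intro Min_le) auto
  moreover have "xs (Suc i) \<le> xs j"
    using ij by (intro xs_le) auto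
  ultimately show ?thesis by simp
qed

lemma abs_jump: "i \<le> n \<Longrightarrow> \<bar>jump i\<bar> = \<delta>"
proof -
  assume i: "i \<le> n"
  have "\<bar>level (Suc i) - level i\<bar> = 1"
  proof (cases "i = 0 \<or> i = n")
    case True
    then show ?thesis using k_first k_last n_ge_1 by (auto simp: level_def)
  next
    case False
    then have "Suc i \<in> {2..n}"
      using i by auto
    then have "\<bar>k (Suc i) - k i\<bar> = 1"
      using k_step by fastforce
    then have "\<bar>real_of_int (k (Suc i)) - real_of_int (k i)\<bar> = 1"
      by (metis of_int_abs of_int_diff of_int_1)
    then show ?thesis using i False by (simp add: level_def)
  qed
  then show ?thesis using delta_pos by (simp add: jump_def abs_mult)
qed

lemma sum_jump_lessThan: "(\<Sum>i<j. jump i) = \<delta> * (level j - level 0)"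
  by (simp add: jump_def sum_distrib_left[symmetric] sum_lessThan_telescope)

lemma sum_jump: "(\<Sum>i\<le>n. jump i) = 0"
  using sum_jump_lessThan[of "Suc n"] by (simp add: lessThan_Suc_atMost level_def)

lemma step_rep_eq_level:
  assumes j: "j \<le> Suc n" and below: "\<forall>i\<le>n. xs i < x \<longleftrightarrow> i < j"
  shows "step_rep x = \<delta> * level j"
proof -
  have "step_rep x = (\<Sum>i\<in>{i\<in>{..n}. xs i < x}. jump i)"
    unfolding step_rep_def by (simp add: sum.inter_filter[symmetric] if_distrib cong: if_cong)
  also have "{i\<in>{..n}. xs i < x} = {..<j}"
    using below j by auto
  finally show ?thesis
    by (simp add: sum_jump_lessThan level_def)
qed

lemma step_rep_outside:
  assumes "x < xs 0 \<or> x > xs n"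
  shows "step_rep x = 0"
  using assms
proof
  assume "x < xs 0"
  then have "\<forall>i\<le>n. xs i < x \<longleftrightarrow> i < 0"
    using xs_le[of 0] by force
  then show ?thesis
    using step_rep_eq_level[of 0 x] by (simp add: level_def)
next
  assume "x > xs n"
  then have "\<forall>i\<le>n. xs i < x \<longleftrightarrow> i < Suc n"
    using xs_le by force
  then show ?thesis
    using step_rep_eq_level[of "Suc n" x] by (simp add: level_def)
qed

lemma step_rep_agrees:
  assumes u_outside: "\<forall>x. (x < xs 0 \<or> x > xs n) \<longrightarrow> u x = 0"
    and u_inside: "\<forall>i\<in>{1..n}. \<forall>x. xs (i - 1) < x \<and> x < xs i \<longrightarrow> u x = real_of_int (k i) * \<delta>"
    and x: "x \<notin> jump_points"
  shows "u x = step_rep x"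
proof (cases "x < xs 0 \<or> x > xs n")
  case True
  then show ?thesis using u_outside step_rep_outside by auto
next
  case False
  have x_ne: "x \<noteq> xs i" if "i \<le> n" for i
    using x that by (auto simp: jump_points_def)
  have "x < xs n"
    using False x_ne[of n] by auto
  define j where "j = (LEAST j. x < xs j)"
  have j: "x < xs j" "j \<le> n"
    unfolding j_def by (rule LeastI[of _ n], fact) (rule Least_le, fact)
  have before_j: "\<not> x < xs i" if "i < j" for i
    using not_less_Least[of i "\<lambda>j. x < xs j"] that j_def by simp
  have "j \<noteq> 0"
    using j False by (cases j) auto
  then have "xs (j - 1) < x"
    using before_j[of "j - 1"] x_ne[of "j - 1"] j by fastforce
  then have "u x = real_of_int (k j) * \<delta>"
    using u_inside j \<open>j \<noteq> 0\<close> by auto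
  moreover have "\<forall>i\<le>n. xs i < x \<longleftrightarrow> i < j"
  proof (intro allI impI iffI)
    fix i
    assume "i \<le> n" "xs i < x"
    then show "i < j"
      using j xs_le[of j i] by (cases "i < j") auto
  next
    fix i
    assume "i \<le> n" "i < j"
    then show "xs i < x"
      using before_j[of i] x_ne[of i] by auto
  qed
  then have "step_rep x = \<delta> * level j"
    using step_rep_eq_level j by simp
  ultimately show ?thesis
    using j \<open>j \<noteq> 0\<close> by (simp add: level_def)
qed

lemma null_sets_jump_points: "jump_points \<in> null_sets lborel"
  by (simp add: jump_points_def finite_imp_null_set_lborel)

lemma AE_notin_jump_points: "AE x in lborel. x \<notin> jump_points"
  by (rule AE_I'[OF null_sets_jump_points]) auto

lemma mollified_eq_step_rep:
  assumes e: "\<epsilon> > 0" and x: "x \<notin> jump_points"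
    and far: "\<forall>i\<le>n. xs i < x \<longrightarrow> \<epsilon> \<le> x - xs i"
  shows "mollified \<epsilon> x = step_rep x"
  unfolding mollified_def step_rep_def
proof (rule sum.cong[OF refl])
  fix i
  assume i: "i \<in> {..n}"
  show "jump i * smooth_heaviside ((x - xs i) / \<epsilon>) = jump i * (if xs i < x then 1 else 0)"
  proof (cases "xs i < x")
    case True
    then have "1 \<le> (x - xs i) / \<epsilon>"
      using far i e by (auto simp: field_simps)
    then show ?thesis
      using True smooth_heaviside_ge_1 by simp
  next
    case False
    then have "(x - xs i) / \<epsilon> \<le> 0"
      using e by (auto simp: divide_nonpos_pos)
    then show ?thesis
      using False smooth_heaviside_nonpos by simp
  qed
qed

lemma mollified_eventually_eq:
  assumes x: "x \<notin> jump_points" and S: "S \<longlonglongrightarrow> 0" and S_pos: "\<And>j. S j > 0"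
  shows "eventually (\<lambda>j. mollified (S j) x = step_rep x) sequentially"
proof -
  define m where "m = Min ((\<lambda>i. \<bar>x - xs i\<bar>) ` {..n})"
  have "m > 0"
    unfolding m_def using x by (subst Min_gr_iff) (auto simp: jump_points_def)
  have "m \<le> \<bar>x - xs i\<bar>" if "i \<le> n" for i
    unfolding m_def using that by (intro Min_le) auto
  then have "mollified (S j) x = step_rep x" if "S j < m" for j
    using that by (intro mollified_eq_step_rep[OF S_pos x]) force
  with order_tendstoD(2)[OF S \<open>m > 0\<close>] show ?thesis
    by (auto elim: eventually_mono)
qed

lemma mollified_left: "\<epsilon> > 0 \<Longrightarrow> x \<le> xs 0 \<Longrightarrow> mollified \<epsilon> x = 0"
proof -
  assume e: "\<epsilon> > 0" and x: "x \<le> xs 0"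
  have "smooth_heaviside ((x - xs i) / \<epsilon>) = 0" if "i \<le> n" for i
    using xs_le[of 0 i] that x e by (intro smooth_heaviside_nonpos divide_nonpos_pos) auto
  then show ?thesis
    unfolding mollified_def by simp
qed

lemma mollified_right: "\<epsilon> > 0 \<Longrightarrow> x \<ge> xs n + \<epsilon> \<Longrightarrow> mollified \<epsilon> x = 0"
proof -
  assume e: "\<epsilon> > 0" and x: "x \<ge> xs n + \<epsilon>"
  have "1 \<le> (x - xs i) / \<epsilon>" if "i \<le> n" for i
    using xs_le[OF that order_refl] x e by (auto simp: field_simps)
  then have "mollified \<epsilon> x = (\<Sum>i\<le>n. jump i)"
    unfolding mollified_def by (intro sum.cong) (auto simp: smooth_heaviside_ge_1)
  then show ?thesis
    using sum_jump by simp
qed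

lemma mollified_outside: "0 < \<epsilon> \<Longrightarrow> \<epsilon> < 1 \<Longrightarrow> x \<notin> {xs 0 .. xs n + 1} \<Longrightarrow> mollified \<epsilon> x = 0"
  using mollified_left[of \<epsilon> x] mollified_right[of \<epsilon> x] by auto

lemma abs_mollified_le: "\<bar>mollified \<epsilon> x\<bar> \<le> real (Suc n) * \<delta>"
proof -
  have "\<bar>mollified \<epsilon> x\<bar> \<le> (\<Sum>i\<le>n. \<bar>jump i\<bar> * \<bar>smooth_heaviside ((x - xs i) / \<epsilon>)\<bar>)"
    unfolding mollified_def abs_mult[symmetric] by (rule sum_abs)
  also have "\<dots> \<le> (\<Sum>i\<le>n. \<delta> * 1)"
    using abs_jump smooth_heaviside_bounds delta_pos by (intro sum_mono mult_mono) auto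
  finally show ?thesis
    by simp
qed

lemma abs_step_rep_le: "\<bar>step_rep x\<bar> \<le> real (Suc n) * \<delta>"
proof -
  have "\<bar>step_rep x\<bar> \<le> (\<Sum>i\<le>n. \<bar>jump i * (if xs i < x then 1 else 0)\<bar>)"
    unfolding step_rep_def by (rule sum_abs)
  also have "\<dots> \<le> (\<Sum>i\<le>n. \<delta>)"
    using abs_jump delta_pos by (intro sum_mono) auto
  finally show ?thesis
    by simp
qed

lemma Cc_inf_mollified: "\<epsilon> > 0 \<Longrightarrow> Cc_inf (mollified \<epsilon>)"
proof -
  assume e: "\<epsilon> > 0"
  have "(\<lambda>x. \<Sum>i\<in>{..n}. jump i * smooth_heaviside ((1/\<epsilon>) * x + (- xs i / \<epsilon>))) \<in> C_inf_funs"
    by (rule smooth_heaviside_combination_C_inf) simp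
  moreover have "(\<lambda>x. \<Sum>i\<in>{..n}. jump i * smooth_heaviside ((1/\<epsilon>) * x + (- xs i / \<epsilon>))) = mollified \<epsilon>"
    unfolding mollified_def by (intro ext sum.cong refl) (simp add: diff_divide_distrib)
  ultimately have "smooth_real (mollified \<epsilon>)"
    using C_inf_funs_imp_smooth_real by metis
  moreover have "{x. mollified \<epsilon> x \<noteq> 0} \<subseteq> {xs 0 .. xs n + \<epsilon>}"
  proof
    fix x
    assume "x \<in> {x. mollified \<epsilon> x \<noteq> 0}"
    then show "x \<in> {xs 0 .. xs n + \<epsilon>}"
      using mollified_left[OF e, of x] mollified_right[OF e, of x] by fastforce
  qed
  then have "bounded {x. mollified \<epsilon> x \<noteq> 0}"
    by (rule bounded_subset[OF bounded_closed_interval])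
  ultimately show ?thesis
    unfolding Cc_inf_def by (simp add: compact_closure)
qed

lemma borel_measurable_mollified [measurable]: "mollified \<epsilon> \<in> borel_measurable borel"
  unfolding mollified_def by measurable

lemma borel_measurable_step_rep [measurable]: "step_rep \<in> borel_measurable borel"
  unfolding step_rep_def by measurable

lemma abs_mollified_diff_le:
  assumes e: "0 < \<epsilon>" "\<epsilon> < min_gap / 2" and xy: "\<bar>y - x\<bar> < min_gap / 2"
  shows "\<bar>mollified \<epsilon> y - mollified \<epsilon> x\<bar> \<le> \<delta>"
proof -
  define T where "T i = jump i * (smooth_heaviside ((y - xs i) / \<epsilon>) - smooth_heaviside ((x - xs i) / \<epsilon>))" for i
  have diff: "mollified \<epsilon> y - mollified \<epsilon> x = (\<Sum>i\<le>n. T i)"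
    unfolding mollified_def T_def by (simp add: sum_subtractf[symmetric] algebra_simps)
  have active: "xs i < max x y \<and> min x y < xs i + \<epsilon>" if "T i \<noteq> 0" for i
  proof (rule ccontr)
    assume "\<not> (xs i < max x y \<and> min x y < xs i + \<epsilon>)"
    then have "max x y \<le> xs i \<or> xs i + \<epsilon> \<le> min x y"
      by linarith
    with that show False
      using smooth_heaviside_scaled_eq[OF e(1)] by (simp add: T_def)
  qed
  have unique: "i = j" if "i \<le> n" "j \<le> n" "T i \<noteq> 0" "T j \<noteq> 0" for i j
  proof -
    have width: "max x y - min x y = \<bar>y - x\<bar>"
      by auto
    have "\<not> i < j" if "i \<le> n" "j \<le> n" "T i \<noteq> 0" "T j \<noteq> 0" for i j
    proof
      assume "i < j"
      with min_gap_le[OF this that(2)] active[OF that(3)] active[OF that(4)] e xy width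
      show False
        by linarith
    qed
    with that show ?thesis
      by (meson linorder_neqE_nat)
  qed
  show ?thesis
  proof (cases "\<exists>i\<le>n. T i \<noteq> 0")
    case False
    then show ?thesis
      using diff delta_pos by simp
  next
    case True
    then obtain i where i: "i \<le> n" "T i \<noteq> 0"
      by blast
    have "(\<Sum>i\<le>n. T i) = T i"
      using i unique by (subst sum.mono_neutral_right[of "{..n}" "{i}"]) auto
    moreover have "\<bar>T i\<bar> \<le> \<delta> * 1"
      unfolding T_def abs_mult using abs_jump[OF i(1)] abs_smooth_heaviside_diff_le_1 delta_pos
      by (intro mult_mono) auto
    ultimately show ?thesis
      using diff by simp
  qed
qed

lemma tendsto_Lp_mollified:
  assumes p: "p \<ge> 0"
  shows "((\<lambda>\<epsilon>. \<integral>\<^sup>+ x. ennreal (\<bar>mollified \<epsilon> x - step_rep x\<bar> powr p) \<partial>lborel) \<longlongrightarrow> 0) (at_right 0)"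
proof (rule tendsto_at_right_sequentially[where b=1])
  fix S :: "nat \<Rightarrow> real"
  assume S_pos: "\<And>j. 0 < S j" and S_less_1: "\<And>j. S j < 1" and S_to_0: "S \<longlonglongrightarrow> 0"
  define w where "w x = ennreal ((2 * (real (Suc n) * \<delta>)) powr p) * indicator {xs 0 .. xs n + 1} x" for x
  have "(\<lambda>j. \<integral>\<^sup>+ x. ennreal (\<bar>mollified (S j) x - step_rep x\<bar> powr p) \<partial>lborel) \<longlonglongrightarrow> (\<integral>\<^sup>+ (x :: real). 0 \<partial>lborel)"
  proof (rule nn_integral_dominated_convergence[where w=w and u'="\<lambda>x. 0"
        and u="\<lambda>j x. ennreal (\<bar>mollified (S j) x - step_rep x\<bar> powr p)"])
    show "AE x in lborel. ennreal (\<bar>mollified (S j) x - step_rep x\<bar> powr p) \<le> w x" for j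
    proof (rule AE_I2)
      fix x
      show "ennreal (\<bar>mollified (S j) x - step_rep x\<bar> powr p) \<le> w x"
      proof (cases "x \<in> {xs 0 .. xs n + 1}")
        case True
        have "\<bar>mollified (S j) x - step_rep x\<bar> \<le> 2 * (real (Suc n) * \<delta>)"
          using abs_mollified_le[of "S j" x] abs_step_rep_le[of x] by linarith
        then show ?thesis
          using True p by (simp add: w_def ennreal_leI powr_mono2)
      next
        case False
        then show ?thesis
          using mollified_outside[OF S_pos S_less_1] step_rep_outside[of x] by auto
      qed
    qed
    show "w \<in> borel_measurable lborel"
      unfolding w_def by measurable
    show "(\<integral>\<^sup>+ x. w x \<partial>lborel) < \<infinity>"
      unfolding w_def using xs_le[of 0 n]
      by (subst nn_integral_cmult_indicator) (auto simp: ennreal_mult_less_top)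
    show "AE x in lborel. (\<lambda>j. ennreal (\<bar>mollified (S j) x - step_rep x\<bar> powr p)) \<longlonglongrightarrow> 0"
    proof (rule eventually_mono[OF AE_notin_jump_points], rule tendsto_eventually)
      fix x
      assume "x \<notin> jump_points"
      from mollified_eventually_eq[OF this S_to_0 S_pos]
      show "\<forall>\<^sub>F j in sequentially. ennreal (\<bar>mollified (S j) x - step_rep x\<bar> powr p) = 0"
        by (rule eventually_mono) simp
    qed
  qed simp_all
  then show "(\<lambda>j. \<integral>\<^sup>+ x. ennreal (\<bar>mollified (S j) x - step_rep x\<bar> powr p) \<partial>lborel) \<longlonglongrightarrow> 0"
    by simp
qed simp

lemma Lambda_density_mollified_le_far_kernel:
  assumes e: "0 < \<epsilon>" "\<epsilon> < min 1 (min_gap / 2)"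
  shows "Lambda_density \<delta> p (mollified \<epsilon>) z \<le> far_kernel (\<delta> powr p) p (min_gap / 2) {xs 0 .. xs n + 1} z"
proof (cases "\<bar>mollified \<epsilon> (snd z) - mollified \<epsilon> (fst z)\<bar> > \<delta>")
  case True
  then have "min_gap / 2 \<le> \<bar>snd z - fst z\<bar>"
    using abs_mollified_diff_le[of \<epsilon> "snd z" "fst z"] e by force
  moreover have "fst z \<in> {xs 0 .. xs n + 1} \<or> snd z \<in> {xs 0 .. xs n + 1}"
    using True mollified_outside[of \<epsilon>] e delta_pos by force
  ultimately show ?thesis
    using True by (simp add: Lambda_density_def far_kernel_def)
qed (simp add: Lambda_density_def)

lemma tendsto_Lambda_mollified:
  assumes p: "p > 0"
  shows "((\<lambda>\<epsilon>. Lambda \<delta> p (mollified \<epsilon>)) \<longlongrightarrow> Lambda \<delta> p step_rep) (at_right 0)"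
  unfolding Lambda_eq_nn_integral_density
proof (rule tendsto_at_right_sequentially[where b="min 1 (min_gap / 2)"])
  show "0 < min 1 (min_gap / 2)"
    using min_gap_pos by simp
  fix S :: "nat \<Rightarrow> real"
  assume S_pos: "\<And>j. 0 < S j" and S_small: "\<And>j. S j < min 1 (min_gap / 2)" and S_to_0: "S \<longlonglongrightarrow> 0"
  show "(\<lambda>j. \<integral>\<^sup>+z. Lambda_density \<delta> p (mollified (S j)) z \<partial>(lborel \<Otimes>\<^sub>M lborel))
      \<longlonglongrightarrow> (\<integral>\<^sup>+z. Lambda_density \<delta> p step_rep z \<partial>(lborel \<Otimes>\<^sub>M lborel))"
  proof (rule nn_integral_dominated_convergence
      [where w="far_kernel (\<delta> powr p) p (min_gap / 2) {xs 0 .. xs n + 1}"])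
    show "(\<integral>\<^sup>+z. far_kernel (\<delta> powr p) p (min_gap / 2) {xs 0 .. xs n + 1} z \<partial>(lborel \<Otimes>\<^sub>M lborel)) < \<infinity>"
      using min_gap_pos p by (intro nn_integral_far_kernel_finite) auto
    show "AE z in lborel \<Otimes>\<^sub>M lborel. Lambda_density \<delta> p (mollified (S j)) z
        \<le> far_kernel (\<delta> powr p) p (min_gap / 2) {xs 0 .. xs n + 1} z" for j
      using Lambda_density_mollified_le_far_kernel[OF S_pos S_small] by simp
    show "AE z in lborel \<Otimes>\<^sub>M lborel.
        (\<lambda>j. Lambda_density \<delta> p (mollified (S j)) z) \<longlonglongrightarrow> Lambda_density \<delta> p step_rep z"
    proof (rule eventually_mono[OF AE_pair_notin_null[OF null_sets_jump_points]], rule tendsto_eventually)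
      fix z :: "real \<times> real"
      assume "fst z \<notin> jump_points \<and> snd z \<notin> jump_points"
      then have "\<forall>\<^sub>F j in sequentially. mollified (S j) (fst z) = step_rep (fst z)
          \<and> mollified (S j) (snd z) = step_rep (snd z)"
        using mollified_eventually_eq[OF _ S_to_0 S_pos] by (simp add: eventually_conj_iff)
      then show "\<forall>\<^sub>F j in sequentially. Lambda_density \<delta> p (mollified (S j)) z = Lambda_density \<delta> p step_rep z"
        by (rule eventually_mono) (simp add: Lambda_density_def indicator_def)
    qed
    have "far_kernel (\<delta> powr p) p (min_gap / 2) {xs 0 .. xs n + 1} \<in> borel_measurable (lborel \<Otimes>\<^sub>M lborel)"
      unfolding far_kernel_def by measurable
    then show "far_kernel (\<delta> powr p) p (min_gap / 2) {xs 0 .. xs n + 1} \<in> borel_measurable (lborel \<Otimes>\<^sub>M lborel)" .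
  qed (simp_all add: borel_measurable_Lambda_density)
qed

end

theorem proposition3p9:
  fixes \<delta> p :: real and u :: "real \<Rightarrow> real"
  assumes "\<delta> > 0" and "p \<ge> 1" and "step_fun \<delta> u"
  shows "\<exists>ue :: real \<Rightarrow> real \<Rightarrow> real.
           (\<forall>\<epsilon>>0. Cc_inf (ue \<epsilon>)) \<and>
           ((\<lambda>\<epsilon>. \<integral>\<^sup>+ x. ennreal (\<bar>ue \<epsilon> x - u x\<bar> powr p) \<partial>lborel) \<longlongrightarrow> 0) (at_right 0) \<and>
           ((\<lambda>\<epsilon>. Lambda \<delta> p (ue \<epsilon>)) \<longlongrightarrow> Lambda \<delta> p u) (at_right 0)"
proof -
  obtain n xs k where n: "n \<ge> 1" and xs: "\<forall>i<n. xs i < xs (Suc i)"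
    and u_outside: "\<forall>x. (x < xs 0 \<or> x > xs n) \<longrightarrow> u x = 0"
    and u_inside: "\<forall>i\<in>{1..n}. \<forall>x. xs (i - 1) < x \<and> x < xs i \<longrightarrow> u x = real_of_int (k i) * \<delta>"
    and k: "\<bar>k 1\<bar> = 1" "\<bar>k n\<bar> = 1" "\<forall>i\<in>{2..n}. \<bar>k i - k (i - 1)\<bar> = 1"
    using assms(3) unfolding step_fun_def by blast
  interpret delta_step \<delta> n xs k
    using assms(1) n xs k by unfold_locales auto
  have u: "u x = step_rep x" if "x \<notin> jump_points" for x
    using step_rep_agrees[OF u_outside u_inside that] .
  from AE_notin_jump_points have "(\<integral>\<^sup>+ x. ennreal (\<bar>mollified \<epsilon> x - u x\<bar> powr p) \<partial>lborel)
      = (\<integral>\<^sup>+ x. ennreal (\<bar>mollified \<epsilon> x - step_rep x\<bar> powr p) \<partial>lborel)" for \<epsilon>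
    by (intro nn_integral_cong_AE) (auto elim!: eventually_mono simp: u)
  moreover have "Lambda \<delta> p u = Lambda \<delta> p step_rep"
    using Lambda_cong_null[OF null_sets_jump_points u] .
  ultimately show ?thesis
    using Cc_inf_mollified tendsto_Lp_mollified[of p] tendsto_Lambda_mollified[of p] assms(2)
    by (intro exI[of _ mollified]) simp
qed

end
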